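(* Under 2-Approval, $2$-by-$2$ GS-games of type (i) and of type (vi) are both realizable: for each of these two types there exist a finite candidate set $C$, a tie-breaking order on $C$, a profile $V$ and a $2$-by-$2$ GS-game for $V$ under 2-Approval of that type.
   Context: Each voter $i$ has a strict linear order $v_i$ over $C$. 2-Approval: each candidate gets one point from each voter ranking her among his top two; the highest score wins, ties broken in favour of the candidate highest in a fixed strict linear order $>$ on $C$. Write $\mathcal{R}$ for the rule and $(V_{-i},v_i')$ for $V$ with $v_i$ replaced by $v_i'$. A GS-manipulation of voter $i$ at $V$ is a vote $v_i'$ such that $i$ strictly prefers $\mathcal{R}(V_{-i},v_i')$ to $\mathcal{R}(V)$ and for every vote $v_i''$ either $\mathcal{R}(V_{-i},v_i'')=\mathcal{R}(V_{-i},v_i')$ or $i$ strictly prefers $\mathcal{R}(V_{-i},v_i')$ to $\mathcal{R}(V_{-i},v_i'')$; $i$ is a GS-manipulator if he has one. A GS-game for $V$ has as players all GS-manipulators at $V$, each player $i$ having action set consisting of $v_i$ and a subset of his GS-manipulations; other voters vote sincerely. A $2$-by-$2$ GS-game is one with exactly two players $1,2$, with action sets $\{s_1,i_1\}$, $\{s_2,i_2\}$, $s_p=v_p$ sincere and $i_p$ a GS-manipulation. Let $W(a,b)$ be the winner when player 1 plays $a$ and player 2 plays $b$. Set $\rho_1=+$ if player 1 strictly prefers $W(i_1,i_2)$ to $W(s_1,i_2)$, $0$ if they are equal, $-$ if he strictly prefers $W(s_1,i_2)$; define $\rho_2$ analogously for player 2 comparing $W(i_1,i_2)$ with $W(i_1,s_2)$.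 Type (i) means $\{\rho_1,\rho_2\}=\{+,+\}$; type (vi) means $\{\rho_1,\rho_2\}=\{+,-\}$. *)

theory Defs
  imports Main
begin

text \<open>A vote (strict linear order over C) is a list without repetitions whose set is C,
  listing candidates from most to least preferred. The tie-breaking order is also such a list
  (earlier = higher). A profile with n voters is a function V from voters {..<n} to votes.\<close>

definition lin_orders :: "nat set \<Rightarrow> nat list set" where
  "lin_orders C = {r. distinct r \<and> set r = C}"

definition pos :: "nat list \<Rightarrow> nat \<Rightarrow> nat" where
  "pos r a = length (takeWhile (\<lambda>x. x \<noteq> a) r)"

definition prefers :: "nat list \<Rightarrow> nat \<Rightarrow> nat \<Rightarrow> bool" where
  "prefers r a b \<longleftrightarrow> a \<in> set r \<and> b \<in> set r \<and> pos r a < pos r b"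

definition score2 :: "nat \<Rightarrow> (nat \<Rightarrow> nat list) \<Rightarrow> nat \<Rightarrow> nat" where
  "score2 n V c = card {i. i < n \<and> c \<in> set (take 2 (V i))}"

definition winner2 :: "nat list \<Rightarrow> nat \<Rightarrow> (nat \<Rightarrow> nat list) \<Rightarrow> nat" where
  "winner2 T n V = hd (filter (\<lambda>c. \<forall>d\<in>set T. score2 n V d \<le> score2 n V c) T)"

definition gs_manip ::
  "nat set \<Rightarrow> nat list \<Rightarrow> nat \<Rightarrow> (nat \<Rightarrow> nat list) \<Rightarrow> nat \<Rightarrow> nat list \<Rightarrow> bool" where
  "gs_manip C T n V i v' \<longleftrightarrow>
     v' \<in> lin_orders C \<and>
     prefers (V i) (winner2 T n (V(i := v'))) (winner2 T n V) \<and>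
     (\<forall>v'' \<in> lin_orders C.
        winner2 T n (V(i := v'')) = winner2 T n (V(i := v')) \<or>
        prefers (V i) (winner2 T n (V(i := v'))) (winner2 T n (V(i := v''))))"

definition gs_manipulator ::
  "nat set \<Rightarrow> nat list \<Rightarrow> nat \<Rightarrow> (nat \<Rightarrow> nat list) \<Rightarrow> nat \<Rightarrow> bool" where
  "gs_manipulator C T n V i \<longleftrightarrow> i < n \<and> (\<exists>v'. gs_manip C T n V i v')"

definition wf_election :: "nat set \<Rightarrow> nat list \<Rightarrow> nat \<Rightarrow> (nat \<Rightarrow> nat list) \<Rightarrow> bool" where
  "wf_election C T n V \<longleftrightarrow> finite C \<and> T \<in> lin_orders C \<and> (\<forall>i<n. V i \<in> lin_orders C)"

text \<open>A 2-by-2 GS-game: players p1, p2 are exactly the GS-manipulators at V,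
  with action sets {V p1, i1} and {V p2, i2}, i1, i2 GS-manipulations.\<close>
definition gs_game_2x2 ::
  "nat set \<Rightarrow> nat list \<Rightarrow> nat \<Rightarrow> (nat \<Rightarrow> nat list) \<Rightarrow> nat \<Rightarrow> nat \<Rightarrow> nat list \<Rightarrow> nat list \<Rightarrow> bool" where
  "gs_game_2x2 C T n V p1 p2 i1 i2 \<longleftrightarrow>
     p1 < n \<and> p2 < n \<and> p1 \<noteq> p2 \<and>
     {i. gs_manipulator C T n V i} = {p1, p2} \<and>
     gs_manip C T n V p1 i1 \<and> gs_manip C T n V p2 i2"

datatype sign = Pos | Zero | Neg

definition cmp :: "nat list \<Rightarrow> nat \<Rightarrow> nat \<Rightarrow> sign" where
  "cmp r x y = (if prefers r x y then Pos else if prefers r y x then Neg else Zero)"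

definition W :: "nat list \<Rightarrow> nat \<Rightarrow> (nat \<Rightarrow> nat list) \<Rightarrow> nat \<Rightarrow> nat \<Rightarrow> nat list \<Rightarrow> nat list \<Rightarrow> nat" where
  "W T n V p1 p2 a b = winner2 T n (V(p1 := a, p2 := b))"

definition game_type ::
  "nat list \<Rightarrow> nat \<Rightarrow> (nat \<Rightarrow> nat list) \<Rightarrow> nat \<Rightarrow> nat \<Rightarrow> nat list \<Rightarrow> nat list \<Rightarrow> sign set" where
  "game_type T n V p1 p2 i1 i2 =
     {cmp (V p1) (W T n V p1 p2 i1 i2) (W T n V p1 p2 (V p1) i2),
      cmp (V p2) (W T n V p1 p2 i1 i2) (W T n V p1 p2 i1 (V p2))}"

end

theory Submission
  imports Defs
begin

text \<open>Under 2-Approval only the top two entries of a ballot matter, so whether a vote is a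
  GS-manipulation is decided by comparing it with the finitely many two-candidate ballots. With two
  voters, both of whom are GS-manipulators, every condition becomes a finite computation, and
  explicit profiles over six candidates exhibit a game of type (i) and one of type (vi).\<close>

lemma winner2_fun_upd_take: "winner2 T n (V(i := v)) = winner2 T n (V(i := take 2 v))"
  unfolding winner2_def score2_def by simp

lemma take_two_lin_order:
  assumes "v \<in> lin_orders C" "2 \<le> card C"
  obtains x y where "take 2 v = [x, y]" "x \<in> C" "y \<in> C" "x \<noteq> y"
proof -
  have "distinct v" "set v = C" using assms(1) by (auto simp: lin_orders_def)
  moreover have "2 \<le> length v" using assms(2) distinct_card[of v] \<open>distinct v\<close> \<open>set v = C\<close> by simp
  then obtain x y r where "v = x # y # r"
    by (metis One_nat_def Suc_1 Suc_le_length_iff)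
  ultimately show thesis using that by auto
qed

lemma gs_manipI:
  assumes "v' \<in> lin_orders C" "2 \<le> card C"
    and "prefers (V i) (winner2 T n (V(i := v'))) (winner2 T n V)"
    and "\<And>x y. x \<in> C \<Longrightarrow> y \<in> C \<Longrightarrow> x \<noteq> y \<Longrightarrow>
      winner2 T n (V(i := [x, y])) = winner2 T n (V(i := v')) \<or>
      prefers (V i) (winner2 T n (V(i := v'))) (winner2 T n (V(i := [x, y])))"
  shows "gs_manip C T n V i v'"
  unfolding gs_manip_def
proof (intro conjI ballI)
  fix v'' assume "v'' \<in> lin_orders C"
  then obtain x y where "take 2 v'' = [x, y]" "x \<in> C" "y \<in> C" "x \<noteq> y"
    using assms(2) by (rule take_two_lin_order)
  moreover have "winner2 T n (V(i := v'')) = winner2 T n (V(i := take 2 v''))"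
    by (rule winner2_fun_upd_take)
  ultimately show "winner2 T n (V(i := v'')) = winner2 T n (V(i := v')) \<or>
      prefers (V i) (winner2 T n (V(i := v'))) (winner2 T n (V(i := v'')))"
    using assms(4) by auto
qed (use assms in auto)

definition profile2 :: "nat list \<Rightarrow> nat list \<Rightarrow> nat \<Rightarrow> nat list" where
  "profile2 a b = (\<lambda>i. if i = 0 then a else b)"

definition approvals2 :: "nat list \<Rightarrow> nat list \<Rightarrow> nat \<Rightarrow> nat" where
  "approvals2 a b c =
     (if c \<in> set (take 2 a) then 1 else 0) + (if c \<in> set (take 2 b) then 1 else 0)"

definition winner2_of2 :: "nat list \<Rightarrow> nat list \<Rightarrow> nat list \<Rightarrow> nat" where
  "winner2_of2 T a b = hd (filter (\<lambda>c. list_all (\<lambda>d. approvals2 a b d \<le> approvals2 a b c) T) T)"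

lemma score2_two_voters: "score2 2 V c = approvals2 (V 0) (V 1) c"
proof -
  have "{i. i < 2 \<and> c \<in> set (take 2 (V i))} =
      (if c \<in> set (take 2 (V 0)) then {0} else {}) \<union> (if c \<in> set (take 2 (V 1)) then {1} else {})"
    using less_2_cases by auto
  then show ?thesis
    unfolding score2_def approvals2_def by simp
qed

lemma winner2_two_voters: "winner2 T 2 V = winner2_of2 T (V 0) (V 1)"
  unfolding winner2_def winner2_of2_def score2_two_voters by (simp add: list_all_iff)

lemma winner2_of2_commute: "winner2_of2 T a b = winner2_of2 T b a"
proof -
  have "approvals2 a b = approvals2 b a"
    by (auto simp: approvals2_def)
  then show ?thesis by (simp add: winner2_of2_def)
qed

text \<open>Comparing only with two-candidate ballots suffices by \<open>gs_manipI\<close> and makes this executable.\<close>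
definition gs_manip_of2 :: "nat list \<Rightarrow> nat list \<Rightarrow> nat list \<Rightarrow> nat list \<Rightarrow> bool" where
  "gs_manip_of2 T a b v \<longleftrightarrow>
     distinct v \<and> set v = set T \<and>
     prefers a (winner2_of2 T v b) (winner2_of2 T a b) \<and>
     list_all (\<lambda>x. list_all (\<lambda>y. x \<noteq> y \<longrightarrow>
         winner2_of2 T [x, y] b = winner2_of2 T v b \<or>
         prefers a (winner2_of2 T v b) (winner2_of2 T [x, y] b)) T) T"

lemma gs_manip_of2_first:
  assumes "gs_manip_of2 T a b v" "2 \<le> card (set T)"
  shows "gs_manip (set T) T 2 (profile2 a b) 0 v"
  using assms
  by (intro gs_manipI)
    (auto simp: gs_manip_of2_def winner2_two_voters profile2_def list_all_iff lin_orders_def)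

lemma gs_manip_of2_second:
  assumes "gs_manip_of2 T b a v" "2 \<le> card (set T)"
  shows "gs_manip (set T) T 2 (profile2 a b) 1 v"
  using assms
  by (intro gs_manipI)
    (auto simp: gs_manip_of2_def winner2_two_voters profile2_def list_all_iff lin_orders_def
      winner2_of2_commute[of T a])

lemma two_voter_gs_game_exists:
  assumes "distinct T" "2 \<le> length T"
    and "distinct a" "set a = set T" "distinct b" "set b = set T"
    and "gs_manip_of2 T a b v1" "gs_manip_of2 T b a v2"
    and "{cmp a (winner2_of2 T v1 v2) (winner2_of2 T a v2),
          cmp b (winner2_of2 T v1 v2) (winner2_of2 T v1 b)} = S"
  shows "\<exists>C T n V p1 p2 i1 i2. wf_election C T n V \<and> gs_game_2x2 C T n V p1 p2 i1 i2 \<and>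
    game_type T n V p1 p2 i1 i2 = S"
proof (intro exI conjI)
  let ?V = "profile2 a b"
  have card: "2 \<le> card (set T)"
    using assms(1,2) by (simp add: distinct_card)
  have manip1: "gs_manip (set T) T 2 ?V 0 v1"
    using assms(7) card by (rule gs_manip_of2_first)
  have manip2: "gs_manip (set T) T 2 ?V 1 v2"
    using assms(8) card by (rule gs_manip_of2_second)
  show "wf_election (set T) T 2 ?V"
    using assms(1,3-6) by (simp add: wf_election_def lin_orders_def profile2_def)
  have "{i. gs_manipulator (set T) T 2 ?V i} = {0, 1}"
    using manip1 manip2 less_2_cases by (auto simp: gs_manipulator_def)
  then show "gs_game_2x2 (set T) T 2 ?V 0 1 v1 v2"
    using manip1 manip2 by (simp add: gs_game_2x2_def)
  show "game_type T 2 ?V 0 1 v1 v2 = S"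
    using assms(9) by (simp add: game_type_def W_def winner2_two_voters profile2_def)
qed

theorem mainTheorem6:
  shows "(\<exists>C T n V p1 p2 i1 i2. wf_election C T n V \<and> gs_game_2x2 C T n V p1 p2 i1 i2 \<and>
            game_type T n V p1 p2 i1 i2 = {Pos}) \<and>
         (\<exists>C T n V p1 p2 i1 i2. wf_election C T n V \<and> gs_game_2x2 C T n V p1 p2 i1 i2 \<and>
            game_type T n V p1 p2 i1 i2 = {Pos, Neg})"
proof
  show "\<exists>C T n V p1 p2 i1 i2. wf_election C T n V \<and> gs_game_2x2 C T n V p1 p2 i1 i2 \<and>
      game_type T n V p1 p2 i1 i2 = {Pos}"
    by (rule two_voter_gs_game_exists[of "[0, 1, 2, 3, 4, 5]"
          "[2, 1, 3, 0, 4, 5]" "[4, 5, 0, 1, 3, 2]" "[2, 3, 1, 0, 4, 5]" "[0, 3, 1, 2, 4, 5]"])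
      code_simp+
  show "\<exists>C T n V p1 p2 i1 i2. wf_election C T n V \<and> gs_game_2x2 C T n V p1 p2 i1 i2 \<and>
      game_type T n V p1 p2 i1 i2 = {Pos, Neg}"
    by (rule two_voter_gs_game_exists[of "[0, 1, 2, 3, 4, 5]"
          "[2, 1, 0, 3, 4, 5]" "[3, 4, 0, 1, 5, 2]" "[2, 5, 1, 0, 3, 4]" "[0, 5, 3, 4, 1, 2]"])
      code_simp+
qed

end
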